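(* Let $n\ge 2$ and let $G_n=H_0H_1\cdots H_{n-1}$ be a spiro hexagonal chain of length $n$ with cut-vertices $c_1,\dots,c_{n-1}$, and let $G_{n-1}=H_0H_1\cdots H_{n-2}$. Then $$W(G_n)=W(G_{n-1})+5\,W(G_{n-1},c_{n-1})+45n-18,$$ and for every vertex $c_n$ of $H_{n-1}$ other than $c_{n-1}$, $$W(G_n,c_n)=W(G_{n-1},c_{n-1})+f(c_n),$$ where $f(c_n)=5(n-1)+9$ if $c_n$ is an ortho-vertex of $H_{n-1}$, $f(c_n)=10(n-1)+9$ if $c_n$ is a meta-vertex of $H_{n-1}$, and $f(c_n)=15(n-1)+9$ if $c_n$ is the para-vertex of $H_{n-1}$. Moreover $W(G_1)=27$ and $W(G_1,c_1)=f(c_1)=9$ for any vertex $c_1$ of $H_0$.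
   Context: All graphs are simple and connected; $d(u,v)$ is the shortest-path distance. For a vertex $v$ of $G$, $W(G,v)=\sum_{u\in V(G)}d_G(u,v)$, and the Wiener index is $W(G)=\sum_{\{u,v\}\subseteq V(G)}d_G(u,v)$. A spiro hexagonal chain of length $n$, $G_n=H_0H_1\cdots H_{n-1}$, is a connected graph in which every block is a hexagon (6-cycle) $H_0,\dots,H_{n-1}$, each hexagon has at most two cut-vertices, each cut-vertex is shared by exactly two hexagons, and for $k=1,\dots,n-1$ the hexagons $H_{k-1}$ and $H_k$ share the cut-vertex $c_k$ (so $c_{k+1}\ne c_k$ are distinct vertices of $H_k$). For $k\ge1$, a vertex of $H_k$ at distance $1$, $2$, $3$ from $c_k$ is called an ortho-, meta-, para-vertex of $H_k$, denoted $o_k,m_k,p_k$ respectively (there are two ortho-, two meta- and one para-vertex). $G_1$ is a single hexagon $H_0$. *)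

theory Defs
  imports Main
begin

text \<open>A graph is given by a finite vertex set V and a symmetric irreflexive
adjacency relation E (with E only relating vertices of V).\<close>

definition is_walk :: "('a \<Rightarrow> 'a \<Rightarrow> bool) \<Rightarrow> 'a \<Rightarrow> 'a \<Rightarrow> 'a list \<Rightarrow> bool" where
  "is_walk E u v p \<longleftrightarrow> p \<noteq> [] \<and> hd p = u \<and> last p = v \<and>
     (\<forall>i. Suc i < length p \<longrightarrow> E (p ! i) (p ! Suc i))"

definition gdist :: "('a \<Rightarrow> 'a \<Rightarrow> bool) \<Rightarrow> 'a \<Rightarrow> 'a \<Rightarrow> nat" where
  "gdist E u v = (LEAST l. \<exists>p. is_walk E u v p \<and> length p = Suc l)"

definition Wv :: "'a set \<Rightarrow> ('a \<Rightarrow> 'a \<Rightarrow> bool) \<Rightarrow> 'a \<Rightarrow> nat" where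
  "Wv V E v = (\<Sum>u\<in>V. gdist E u v)"

text \<open>Wiener index: sum over unordered pairs = half the sum over ordered pairs.\<close>
definition Wiener :: "'a set \<Rightarrow> ('a \<Rightarrow> 'a \<Rightarrow> bool) \<Rightarrow> nat" where
  "Wiener V E = (\<Sum>u\<in>V. \<Sum>v\<in>V. gdist E u v) div 2"

text \<open>A chain is given by hv :: nat => nat => 'a, where hv k 0, ..., hv k 5 are the
vertices of hexagon H_k in cyclic order.\<close>

definition hex :: "(nat \<Rightarrow> nat \<Rightarrow> 'a) \<Rightarrow> nat \<Rightarrow> 'a set" where
  "hex hv k = hv k ` {..<6}"

definition chain_verts :: "(nat \<Rightarrow> nat \<Rightarrow> 'a) \<Rightarrow> nat \<Rightarrow> 'a set" where
  "chain_verts hv m = (\<Union>k<m. hex hv k)"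

definition chain_adj :: "(nat \<Rightarrow> nat \<Rightarrow> 'a) \<Rightarrow> nat \<Rightarrow> 'a \<Rightarrow> 'a \<Rightarrow> bool" where
  "chain_adj hv m x y \<longleftrightarrow> (\<exists>k<m. \<exists>i<6.
     (x = hv k i \<and> y = hv k (Suc i mod 6)) \<or> (y = hv k i \<and> x = hv k (Suc i mod 6)))"

definition cutv :: "(nat \<Rightarrow> nat \<Rightarrow> 'a) \<Rightarrow> nat \<Rightarrow> 'a" where
  "cutv hv k = (THE x. x \<in> hex hv (k - 1) \<inter> hex hv k)"

text \<open>Spiro hexagonal chain of length n: each H_k is a 6-cycle, consecutive hexagons
share exactly one vertex (the cut-vertex c_k), non-consecutive hexagons are disjoint
(so each cut-vertex lies in exactly two hexagons and every block is a hexagon),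
and c_{k+1} differs from c_k.\<close>
definition spiro_chain :: "(nat \<Rightarrow> nat \<Rightarrow> 'a) \<Rightarrow> nat \<Rightarrow> bool" where
  "spiro_chain hv n \<longleftrightarrow> n \<ge> 1 \<and>
     (\<forall>k<n. inj_on (hv k) {..<6}) \<and>
     (\<forall>k. 1 \<le> k \<and> k < n \<longrightarrow> card (hex hv (k - 1) \<inter> hex hv k) = 1) \<and>
     (\<forall>j k. Suc j < k \<and> k < n \<longrightarrow> hex hv j \<inter> hex hv k = {}) \<and>
     (\<forall>k. 1 \<le> k \<and> Suc k < n \<longrightarrow> cutv hv (Suc k) \<noteq> cutv hv k)"

end

theory Submission
  imports Defs
begin

text \<open>\<open>G\<^sub>n\<close> is the one-point union of \<open>G\<^sub>n\<^sub>-\<^sub>1\<close> and the hexagon \<open>H\<^sub>n\<^sub>-\<^sub>1\<close> at the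
  cut vertex \<open>c\<^sub>n\<^sub>-\<^sub>1\<close>. In a one-point union of connected graphs every path between the
  two sides passes through the cut vertex, so a distance across it splits as
  \<open>d(u,c) + d(c,x)\<close>; summing yields \<open>W(G,x)\<close> and the total distance sum of the union in
  terms of those of the parts, their orders and the distance sums at \<open>c\<close>. In a hexagon every
  vertex has distance sum \<open>0+1+1+2+2+3 = 9\<close>, and \<open>G\<^sub>n\<^sub>-\<^sub>1\<close> has \<open>5(n-1)+1\<close> vertices;
  substituting these gives the recurrences. Distances are computed exactly by exhibiting a walk
  together with a potential that grows by at most one along every edge.\<close>

section \<open>Walks and distances\<close>

lemma is_walk_singleton [simp]: "is_walk E u v [x] \<longleftrightarrow> x = u \<and> x = v"
  unfolding is_walk_def by auto

lemma is_walk_Cons_Cons: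
  "is_walk E u v (x # y # p) \<longleftrightarrow> x = u \<and> E x y \<and> is_walk E y v (y # p)"
  unfolding is_walk_def by (auto simp: nth_Cons' less_Suc_eq_0_disj split: if_splits)

lemma is_walk_nonempty: "is_walk E u v p \<Longrightarrow> p \<noteq> []"
  by (simp add: is_walk_def)

lemma is_walk_edge: "E x y \<Longrightarrow> is_walk E x y [x, y]"
  by (simp add: is_walk_Cons_Cons)

lemma is_walk_append:
  "is_walk E u v p \<Longrightarrow> is_walk E v w q \<Longrightarrow> is_walk E u w (p @ tl q)"
proof (induction p arbitrary: u rule: induct_list012)
  case 1
  then show ?case by (simp add: is_walk_def)
next
  case (2 x)
  then show ?case by (cases q) (auto simp: is_walk_def)
next
  case (3 x y p)
  then show ?case by (auto simp: is_walk_Cons_Cons)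
qed

lemma is_walk_rev: "symp E \<Longrightarrow> is_walk E u v p \<Longrightarrow> is_walk E v u (rev p)"
proof (induction p arbitrary: u rule: induct_list012)
  case 1
  then show ?case by (simp add: is_walk_def)
next
  case (2 x)
  then show ?case by auto
next
  case (3 x y p)
  then have "is_walk E v y (rev (y # p))" and "is_walk E y u [y, x]"
    by (auto simp: is_walk_Cons_Cons dest: sympD)
  from is_walk_append[OF this] show ?case by simp
qed

lemma is_walk_mono: "is_walk E u v p \<Longrightarrow> (\<And>x y. E x y \<Longrightarrow> E' x y) \<Longrightarrow> is_walk E' u v p"
  unfolding is_walk_def by auto

lemma gdist_less_length: "is_walk E u v p \<Longrightarrow> gdist E u v < length p"
proof -
  assume p: "is_walk E u v p"
  then have "length p = Suc (length p - 1)" using is_walk_nonempty by fastforce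
  with p have "gdist E u v \<le> length p - 1" unfolding gdist_def by (metis (mono_tags) Least_le)
  then show ?thesis using \<open>length p = Suc (length p - 1)\<close> by linarith
qed

lemma shortest_walk:
  assumes "is_walk E u v p"
  obtains q where "is_walk E u v q" and "length q = Suc (gdist E u v)"
proof -
  have "\<exists>l p. is_walk E u v p \<and> length p = Suc l"
    using assms is_walk_nonempty[OF assms] by (cases p) force+
  then have "\<exists>q. is_walk E u v q \<and> length q = Suc (gdist E u v)"
    unfolding gdist_def by (rule LeastI_ex)
  then show ?thesis using that by blast
qed

lemma gdist_self [simp]: "gdist E u u = 0"
  using gdist_less_length[of E u u "[u]"] by simp

lemma gdist_commute_le: "symp E \<Longrightarrow> is_walk E u v p \<Longrightarrow> gdist E v u \<le> gdist E u v"
  by (metis gdist_less_length is_walk_rev length_rev less_Suc_eq_le shortest_walk)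

lemma gdist_commute: "symp E \<Longrightarrow> is_walk E u v p \<Longrightarrow> gdist E v u = gdist E u v"
  by (meson antisym gdist_commute_le is_walk_rev)

lemma gdist_edge_step: "is_walk E u a p \<Longrightarrow> E a b \<Longrightarrow> gdist E u b \<le> gdist E u a + 1"
proof -
  assume "is_walk E u a p" "E a b"
  then obtain q where "is_walk E u a q" "length q = Suc (gdist E u a)"
    by (meson shortest_walk)
  moreover from this have "is_walk E u b (q @ [b])"
    using is_walk_append[OF _ is_walk_edge[of E a b]] \<open>E a b\<close> by fastforce
  ultimately show ?thesis using gdist_less_length[of E u b "q @ [b]"] by simp
qed

lemma lipschitz_along_walk:
  fixes \<phi> :: "'a \<Rightarrow> nat"
  assumes "\<And>x y. E x y \<Longrightarrow> \<phi> y \<le> \<phi> x + 1"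
  shows "is_walk E u v p \<Longrightarrow> \<phi> v \<le> \<phi> u + (length p - 1)"
proof (induction p arbitrary: u rule: induct_list012)
  case 1
  then show ?case by (simp add: is_walk_def)
next
  case (2 x)
  then show ?case by auto
next
  case (3 x y p)
  then have "\<phi> v \<le> \<phi> y + length p" and "\<phi> y \<le> \<phi> u + 1"
    using assms by (auto simp: is_walk_Cons_Cons)
  then show ?case by simp
qed

lemma gdist_eqI:
  fixes \<phi> :: "'a \<Rightarrow> nat"
  assumes "\<And>x y. E x y \<Longrightarrow> \<phi> y \<le> \<phi> x + 1" and "\<phi> u = 0"
    and "is_walk E u v p" and "length p = Suc (\<phi> v)"
  shows "gdist E u v = \<phi> v"
proof -
  obtain q where "is_walk E u v q" "length q = Suc (gdist E u v)"
    using assms(3) by (rule shortest_walk)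
  with lipschitz_along_walk[OF assms(1)] assms(2) have "\<phi> v \<le> gdist E u v" by fastforce
  moreover have "gdist E u v < Suc (\<phi> v)" using gdist_less_length[OF assms(3)] assms(4) by simp
  ultimately show ?thesis by simp
qed

definition connected_on :: "('a \<Rightarrow> 'a \<Rightarrow> bool) \<Rightarrow> 'a set \<Rightarrow> bool" where
  "connected_on E A \<longleftrightarrow> (\<forall>x\<in>A. \<forall>y\<in>A. \<exists>p. is_walk E x y p)"

definition dist_sum :: "'a set \<Rightarrow> ('a \<Rightarrow> 'a \<Rightarrow> bool) \<Rightarrow> nat" where
  "dist_sum V E = (\<Sum>u\<in>V. \<Sum>v\<in>V. gdist E u v)"

lemma Wiener_eq_dist_sum_div_2: "Wiener V E = dist_sum V E div 2"
  unfolding Wiener_def dist_sum_def ..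

lemma dist_sum_eq_sum_Wv: "dist_sum V E = (\<Sum>v\<in>V. Wv V E v)"
  unfolding dist_sum_def Wv_def by (rule sum.swap)

section \<open>One-point unions\<close>

locale one_point_union =
  fixes A B :: "'a set" and E1 E2 :: "'a \<Rightarrow> 'a \<Rightarrow> bool" and c :: 'a
  assumes finite_A: "finite A" and finite_B: "finite B"
    and edges_A: "\<And>x y. E1 x y \<Longrightarrow> x \<in> A \<and> y \<in> A"
    and edges_B: "\<And>x y. E2 x y \<Longrightarrow> x \<in> B \<and> y \<in> B"
    and symp_E1: "symp E1" and symp_E2: "symp E2"
    and connected_A: "connected_on E1 A" and connected_B: "connected_on E2 B"
    and A_inter_B: "A \<inter> B = {c}"
begin

lemma c_in_A: "c \<in> A" and c_in_B: "c \<in> B"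
  using A_inter_B by auto

lemma swap: "one_point_union B A E2 E1 c"
  by unfold_locales
    (use finite_A finite_B edges_A edges_B symp_E1 symp_E2 connected_A connected_B A_inter_B in auto)

lemma shortest_walk_A:
  assumes "x \<in> A" "y \<in> A"
  obtains p where "is_walk E1 x y p" and "length p = Suc (gdist E1 x y)"
  using connected_A assms unfolding connected_on_def by (meson shortest_walk)

lemma shortest_walk_B:
  assumes "x \<in> B" "y \<in> B"
  obtains p where "is_walk E2 x y p" and "length p = Suc (gdist E2 x y)"
  using connected_B assms unfolding connected_on_def by (meson shortest_walk)

lemma is_walk_union_A: "is_walk E1 x y p \<Longrightarrow> is_walk (sup E1 E2) x y p"
  by (erule is_walk_mono) simp

lemma is_walk_union_B: "is_walk E2 x y p \<Longrightarrow> is_walk (sup E1 E2) x y p"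
  by (erule is_walk_mono) simp

lemma gdist_union_from_A:
  assumes u: "u \<in> A" and x: "x \<in> A \<union> B"
  shows "gdist (sup E1 E2) u x = (if x \<in> A then gdist E1 u x else gdist E1 u c + gdist E2 c x)"
proof -
  define \<phi> where "\<phi> z = (if z \<in> A then gdist E1 u z else gdist E1 u c + gdist E2 c z)" for z
  have \<phi>_B: "\<phi> z = gdist E1 u c + gdist E2 c z" if "z \<in> B" for z
  proof (cases "z \<in> A")
    case True
    with that A_inter_B have "z = c" by blast
    then show ?thesis by (simp add: \<phi>_def)
  qed (simp add: \<phi>_def)
  have "\<phi> b \<le> \<phi> a + 1" if "sup E1 E2 a b" for a b
  proof (cases "E1 a b")
    case True
    with edges_A obtain p where "is_walk E1 u a p" using u shortest_walk_A by metis
    from gdist_edge_step[OF this True] show ?thesis using edges_A[OF True] by (simp add: \<phi>_def)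
  next
    case False
    with that have e: "E2 a b" by simp
    with edges_B obtain p where "is_walk E2 c a p" using c_in_B shortest_walk_B by metis
    from gdist_edge_step[OF this e] show ?thesis using edges_B[OF e] by (simp add: \<phi>_B)
  qed
  moreover have "\<phi> u = 0" using u by (simp add: \<phi>_def)
  moreover obtain p where "is_walk (sup E1 E2) u x p" and "length p = Suc (\<phi> x)"
  proof (cases "x \<in> A")
    case True
    with shortest_walk_A[OF u True] is_walk_union_A show ?thesis using that by (metis \<phi>_def)
  next
    case False
    with x have "x \<in> B" by simp
    obtain p where p: "is_walk E1 u c p" "length p = Suc (gdist E1 u c)"
      using shortest_walk_A[OF u c_in_A] .
    obtain q where q: "is_walk E2 c x q" "length q = Suc (gdist E2 c x)"
      using shortest_walk_B[OF c_in_B \<open>x \<in> B\<close>] .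
    have "is_walk (sup E1 E2) u x (p @ tl q)"
      using is_walk_append[OF is_walk_union_A[OF p(1)] is_walk_union_B[OF q(1)]] .
    then show ?thesis using that p(2) q(2) False by (simp add: \<phi>_def)
  qed
  ultimately show ?thesis using gdist_eqI[of "sup E1 E2" \<phi>] by (simp add: \<phi>_def)
qed

lemma gdist_union_from_B:
  assumes "u \<in> B" and "x \<in> A \<union> B"
  shows "gdist (sup E1 E2) u x = (if x \<in> B then gdist E2 u x else gdist E2 u c + gdist E1 c x)"
proof -
  interpret swapped: one_point_union B A E2 E1 c by (rule swap)
  show ?thesis using swapped.gdist_union_from_A assms by (simp add: sup_commute Un_commute)
qed

lemma gdist_union_A_B:
  assumes "u \<in> A" and "x \<in> B"
  shows "gdist (sup E1 E2) u x = gdist E1 u c + gdist E2 c x"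
proof (cases "x \<in> A")
  case True
  with assms A_inter_B have "x = c" by blast
  with assms show ?thesis by (simp add: gdist_union_from_A)
qed (use assms in \<open>simp add: gdist_union_from_A\<close>)

lemma gdist_union_B_B: "u \<in> B \<Longrightarrow> x \<in> B \<Longrightarrow> gdist (sup E1 E2) u x = gdist E2 u x"
  by (simp add: gdist_union_from_B)

lemma gdist_union_from_c: "x \<in> B \<Longrightarrow> gdist (sup E1 E2) c x = gdist E2 c x"
  using gdist_union_A_B[OF c_in_A] by simp

lemma connected_union: "connected_on (sup E1 E2) (A \<union> B)"
proof -
  have "\<exists>p. is_walk (sup E1 E2) c z p" if "z \<in> A \<union> B" for z
    using that c_in_A c_in_B shortest_walk_A shortest_walk_B is_walk_union_A is_walk_union_B
    by (metis Un_iff)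
  moreover have "symp (sup E1 E2)"
    using symp_E1 symp_E2 by (auto intro!: sympI dest: sympD)
  ultimately show ?thesis
    unfolding connected_on_def by (meson is_walk_append is_walk_rev)
qed

lemma card_union: "card (A \<union> B) + 1 = card A + card B"
  using card_Un_Int[OF finite_A finite_B] A_inter_B by simp

lemma Wv_union_B:
  assumes x: "x \<in> B"
  shows "Wv (A \<union> B) (sup E1 E2) x + gdist E2 c x = Wv A E1 c + card A * gdist E2 c x + Wv B E2 x"
proof -
  have "Wv (A \<union> B) (sup E1 E2) x + gdist E2 c x
      = (\<Sum>u\<in>A. gdist (sup E1 E2) u x) + (\<Sum>u\<in>B. gdist (sup E1 E2) u x)"
    using sum.union_inter[OF finite_A finite_B, of "\<lambda>u. gdist (sup E1 E2) u x"] A_inter_B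
      gdist_union_from_c[OF x]
    unfolding Wv_def by simp
  also have "(\<Sum>u\<in>A. gdist (sup E1 E2) u x) = (\<Sum>u\<in>A. gdist E1 u c + gdist E2 c x)"
    using x by (simp add: gdist_union_A_B)
  also have "(\<Sum>u\<in>B. gdist (sup E1 E2) u x) = Wv B E2 x"
    using x by (simp add: gdist_union_B_B Wv_def)
  finally show ?thesis unfolding Wv_def sum.distrib sum_constant of_nat_id .
qed

lemma Wv_union_A:
  assumes "x \<in> A"
  shows "Wv (A \<union> B) (sup E1 E2) x + gdist E1 c x = Wv B E2 c + card B * gdist E1 c x + Wv A E1 x"
proof -
  interpret swapped: one_point_union B A E2 E1 c by (rule swap)
  show ?thesis using swapped.Wv_union_B assms by (simp add: sup_commute Un_commute)
qed

lemma Wv_union_c: "Wv (A \<union> B) (sup E1 E2) c = Wv A E1 c + Wv B E2 c"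
  using Wv_union_B[OF c_in_B] by simp

lemma sum_gdist_from_c_A: "(\<Sum>v\<in>A. gdist E1 c v) = Wv A E1 c"
  unfolding Wv_def
  by (rule sum.cong) (use shortest_walk_A c_in_A symp_E1 in \<open>metis gdist_commute\<close>)+

lemma sum_gdist_from_c_B: "(\<Sum>v\<in>B. gdist E2 c v) = Wv B E2 c"
proof -
  interpret swapped: one_point_union B A E2 E1 c by (rule swap)
  show ?thesis by (rule swapped.sum_gdist_from_c_A)
qed

text \<open>Stated without subtraction; equivalently the ordered distance sum of the union is
  \<open>T\<^sub>1 + T\<^sub>2 + 2((|B| - 1) W\<^sub>1(c) + (|A| - 1) W\<^sub>2(c))\<close>.\<close>

lemma dist_sum_union:
  "dist_sum (A \<union> B) (sup E1 E2) + 2 * (Wv A E1 c + Wv B E2 c)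
     = dist_sum A E1 + dist_sum B E2 + 2 * (card B * Wv A E1 c + card A * Wv B E2 c)"
proof -
  let ?W = "Wv (A \<union> B) (sup E1 E2)"
  have "(\<Sum>v\<in>A. ?W v + gdist E1 c v) = (\<Sum>v\<in>A. Wv B E2 c + card B * gdist E1 c v + Wv A E1 v)"
    by (rule sum.cong) (simp_all add: Wv_union_A)
  then have "(\<Sum>v\<in>A. ?W v) + Wv A E1 c = card A * Wv B E2 c + card B * Wv A E1 c + dist_sum A E1"
    using sum_gdist_from_c_A by (simp add: sum.distrib sum_distrib_left[symmetric] dist_sum_eq_sum_Wv)
  moreover have "(\<Sum>v\<in>B. ?W v + gdist E2 c v) = (\<Sum>v\<in>B. Wv A E1 c + card A * gdist E2 c v + Wv B E2 v)"
    by (rule sum.cong) (simp_all add: Wv_union_B)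
  then have "(\<Sum>v\<in>B. ?W v) + Wv B E2 c = card B * Wv A E1 c + card A * Wv B E2 c + dist_sum B E2"
    using sum_gdist_from_c_B by (simp add: sum.distrib sum_distrib_left[symmetric] dist_sum_eq_sum_Wv)
  moreover have "dist_sum (A \<union> B) (sup E1 E2) + ?W c = (\<Sum>v\<in>A. ?W v) + (\<Sum>v\<in>B. ?W v)"
    using sum.union_inter[OF finite_A finite_B] A_inter_B by (simp add: dist_sum_eq_sum_Wv)
  ultimately show ?thesis using Wv_union_c by simp
qed

end

section \<open>The hexagon\<close>

definition hex_adj :: "(nat \<Rightarrow> nat \<Rightarrow> 'a) \<Rightarrow> nat \<Rightarrow> 'a \<Rightarrow> 'a \<Rightarrow> bool" where
  "hex_adj hv k x y \<longleftrightarrow>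
     (\<exists>i<6. (x = hv k i \<and> y = hv k (Suc i mod 6)) \<or> (y = hv k i \<and> x = hv k (Suc i mod 6)))"

definition cycle6_dist :: "nat \<Rightarrow> nat \<Rightarrow> nat" where
  "cycle6_dist i j = (let d = (if i \<le> j then j - i else i - j) in min d (6 - d))"

lemma less_6_cases: "(i::nat) < 6 \<longleftrightarrow> i = 0 \<or> i = 1 \<or> i = 2 \<or> i = 3 \<or> i = 4 \<or> i = 5"
  by arith

lemma cycle6_dist_reached:
  "i < 6 \<Longrightarrow> j < 6 \<Longrightarrow> (i + cycle6_dist i j) mod 6 = j \<or> (j + cycle6_dist i j) mod 6 = i"
  unfolding less_6_cases by (elim disjE) (simp_all add: cycle6_dist_def)

lemma cycle6_dist_step:
  "i < 6 \<Longrightarrow> t < 6 \<Longrightarrow>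
     cycle6_dist i (Suc t mod 6) \<le> cycle6_dist i t + 1 \<and> cycle6_dist i t \<le> cycle6_dist i (Suc t mod 6) + 1"
  unfolding less_6_cases by (elim disjE) (simp_all add: cycle6_dist_def)

lemma sum_cycle6_dist: "j < 6 \<Longrightarrow> (\<Sum>i<6. cycle6_dist i j) = 9"
  unfolding less_6_cases by (elim disjE) (simp_all add: cycle6_dist_def eval_nat_numeral)

lemma symp_hex_adj: "symp (hex_adj hv k)"
  unfolding hex_adj_def by (auto intro: sympI)

lemma hex_adj_in_hex: "hex_adj hv k x y \<Longrightarrow> x \<in> hex hv k \<and> y \<in> hex hv k"
  unfolding hex_adj_def hex_def by auto

lemma finite_hex [simp]: "finite (hex hv k)"
  unfolding hex_def by simp

lemma card_hex: "inj_on (hv k) {..<6} \<Longrightarrow> card (hex hv k) = 6"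
  unfolding hex_def by (simp add: card_image)

lemma hex_walk_around:
  assumes "i < 6"
  shows "is_walk (hex_adj hv k) (hv k i) (hv k ((i + t) mod 6)) (map (\<lambda>s. hv k ((i + s) mod 6)) [0..<Suc t])"
proof (induction t)
  case 0
  then show ?case using assms by simp
next
  case (Suc t)
  have "hex_adj hv k (hv k ((i + t) mod 6)) (hv k ((i + Suc t) mod 6))"
    unfolding hex_adj_def by (rule exI[of _ "(i + t) mod 6"]) (simp add: mod_Suc_eq)
  from is_walk_append[OF Suc is_walk_edge[of "hex_adj hv k", OF this]] show ?case by simp
qed

lemma hex_walk:
  assumes i: "i < 6" and j: "j < 6"
  obtains p where "is_walk (hex_adj hv k) (hv k i) (hv k j) p" and "length p = Suc (cycle6_dist i j)"
  using cycle6_dist_reached[OF i j]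
proof
  assume "(i + cycle6_dist i j) mod 6 = j"
  then show ?thesis using that hex_walk_around[OF i, of hv k "cycle6_dist i j"] by fastforce
next
  assume "(j + cycle6_dist i j) mod 6 = i"
  then have "is_walk (hex_adj hv k) (hv k j) (hv k i) (map (\<lambda>s. hv k ((j + s) mod 6)) [0..<Suc (cycle6_dist i j)])"
    using hex_walk_around[OF j, of hv k "cycle6_dist i j"] by simp
  from is_walk_rev[OF symp_hex_adj this] show ?thesis using that by fastforce
qed

lemma gdist_hex:
  assumes inj: "inj_on (hv k) {..<6}" and i: "i < 6" and j: "j < 6"
  shows "gdist (hex_adj hv k) (hv k i) (hv k j) = cycle6_dist i j"
proof -
  define \<phi> where "\<phi> z = cycle6_dist i (inv_into {..<6} (hv k) z)" for z
  have \<phi>_hv: "\<phi> (hv k t) = cycle6_dist i t" if "t < 6" for t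
    using inv_into_f_f[OF inj] that by (simp add: \<phi>_def)
  have "\<phi> b \<le> \<phi> a + 1" if edge: "hex_adj hv k a b" for a b
  proof -
    obtain t where "t < 6" and "(a = hv k t \<and> b = hv k (Suc t mod 6)) \<or> (b = hv k t \<and> a = hv k (Suc t mod 6))"
      using edge unfolding hex_adj_def by blast
    then show ?thesis using cycle6_dist_step[OF i] \<phi>_hv[of t] \<phi>_hv[of "Suc t mod 6"] by auto
  qed
  moreover obtain p where "is_walk (hex_adj hv k) (hv k i) (hv k j) p" "length p = Suc (cycle6_dist i j)"
    using hex_walk[OF i j] .
  moreover have "\<phi> (hv k i) = 0" using \<phi>_hv[OF i] by (simp add: cycle6_dist_def)
  ultimately show ?thesis using gdist_eqI[of "hex_adj hv k" \<phi>] \<phi>_hv[OF j] by metis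
qed

lemma connected_hex: "connected_on (hex_adj hv k) (hex hv k)"
  unfolding connected_on_def hex_def
proof (intro ballI)
  fix x y assume "x \<in> hv k ` {..<6}" "y \<in> hv k ` {..<6}"
  then obtain i j where "i < 6" "j < 6" "x = hv k i" "y = hv k j" by auto
  then show "\<exists>p. is_walk (hex_adj hv k) x y p" using hex_walk by metis
qed

lemma Wv_hex:
  assumes inj: "inj_on (hv k) {..<6}" and x: "x \<in> hex hv k"
  shows "Wv (hex hv k) (hex_adj hv k) x = 9"
proof -
  obtain j where j: "j < 6" "x = hv k j" using x unfolding hex_def by auto
  have "Wv (hex hv k) (hex_adj hv k) x = (\<Sum>i<6. gdist (hex_adj hv k) (hv k i) (hv k j))"
    unfolding Wv_def hex_def j(2) by (rule sum.reindex[OF inj, unfolded comp_def])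
  also have "\<dots> = (\<Sum>i<6. cycle6_dist i j)" using gdist_hex[of hv k, OF inj _ j(1)] by simp
  finally show ?thesis using sum_cycle6_dist[OF j(1)] by simp
qed

lemma dist_sum_hex: "inj_on (hv k) {..<6} \<Longrightarrow> dist_sum (hex hv k) (hex_adj hv k) = 54"
  by (simp add: dist_sum_eq_sum_Wv Wv_hex card_hex)

section \<open>Spiro hexagonal chains\<close>

lemma chain_adj_Suc: "chain_adj hv (Suc m) = sup (chain_adj hv m) (hex_adj hv m)"
  unfolding chain_adj_def hex_adj_def by (auto simp: less_Suc_eq)

lemma chain_verts_Suc: "chain_verts hv (Suc m) = chain_verts hv m \<union> hex hv m"
  unfolding chain_verts_def by (auto simp: lessThan_Suc)

lemma chain_adj_1: "chain_adj hv 1 = hex_adj hv 0"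
  unfolding chain_adj_def hex_adj_def by auto

lemma chain_verts_1: "chain_verts hv 1 = hex hv 0"
  unfolding chain_verts_def by auto

lemma chain_adj_in_verts: "chain_adj hv m x y \<Longrightarrow> x \<in> chain_verts hv m \<and> y \<in> chain_verts hv m"
  unfolding chain_adj_def chain_verts_def hex_def by fastforce

lemma symp_chain_adj: "symp (chain_adj hv m)"
  unfolding chain_adj_def by (auto intro: sympI)

lemma finite_chain_verts [simp]: "finite (chain_verts hv m)"
  unfolding chain_verts_def by simp

lemma spiro_chain_inj: "spiro_chain hv n \<Longrightarrow> k < n \<Longrightarrow> inj_on (hv k) {..<6}"
  unfolding spiro_chain_def by blast

lemma spiro_chain_verts_inter_hex:
  assumes chain: "spiro_chain hv n" and m: "1 \<le> m" "m < n"
  shows "chain_verts hv m \<inter> hex hv m = {cutv hv m}"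
proof -
  have "card (hex hv (m - 1) \<inter> hex hv m) = 1" using chain m unfolding spiro_chain_def by blast
  then obtain a where a: "hex hv (m - 1) \<inter> hex hv m = {a}" by (rule card_1_singletonE)
  then have "cutv hv m = a" unfolding cutv_def by simp
  moreover have "hex hv k \<inter> hex hv m = {}" if "Suc k < m" for k
    using chain that m unfolding spiro_chain_def by blast
  then have "hex hv k \<inter> hex hv m \<subseteq> {a}" if "k < m" for k
  proof (cases "Suc k < m")
    case False
    with that have "k = m - 1" by simp
    with a show ?thesis by simp
  qed simp
  moreover have "m - 1 < m" using m by simp
  ultimately show ?thesis
    using a unfolding chain_verts_def by blast
qed

lemma one_point_union_chain_hex:
  assumes "spiro_chain hv n" and "1 \<le> m" "m < n"
    and "connected_on (chain_adj hv m) (chain_verts hv m)"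
  shows "one_point_union (chain_verts hv m) (hex hv m) (chain_adj hv m) (hex_adj hv m) (cutv hv m)"
  by unfold_locales
    (use assms spiro_chain_verts_inter_hex in \<open>auto simp: symp_chain_adj symp_hex_adj connected_hex
      dest: chain_adj_in_verts hex_adj_in_hex\<close>)

lemma spiro_chain_connected:
  assumes chain: "spiro_chain hv n"
  shows "1 \<le> m \<Longrightarrow> m \<le> n \<Longrightarrow> connected_on (chain_adj hv m) (chain_verts hv m)"
proof (induction m)
  case 0
  then show ?case by simp
next
  case (Suc m)
  show ?case
  proof (cases "m = 0")
    case True
    then show ?thesis using chain_adj_1 chain_verts_1 connected_hex by (metis One_nat_def)
  next
    case False
    with Suc have "1 \<le> m" "m < n" "connected_on (chain_adj hv m) (chain_verts hv m)" by auto
    from one_point_union.connected_union[OF one_point_union_chain_hex[OF chain this]]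
    show ?thesis unfolding chain_adj_Suc chain_verts_Suc .
  qed
qed

lemma spiro_chain_one_point_union:
  assumes "spiro_chain hv n" and "1 \<le> m" "m < n"
  shows "one_point_union (chain_verts hv m) (hex hv m) (chain_adj hv m) (hex_adj hv m) (cutv hv m)"
  using one_point_union_chain_hex[OF assms spiro_chain_connected[OF assms(1,2)]] assms(3) by simp

lemma card_spiro_chain_verts:
  assumes chain: "spiro_chain hv n"
  shows "1 \<le> m \<Longrightarrow> m \<le> n \<Longrightarrow> card (chain_verts hv m) = 5 * m + 1"
proof (induction m)
  case 0
  then show ?case by simp
next
  case (Suc m)
  show ?case
  proof (cases "m = 0")
    case True
    with Suc.prems have "inj_on (hv 0) {..<6}" using spiro_chain_inj[OF chain, of 0] by simp
    then show ?thesis using True chain_verts_1[of hv] card_hex by simp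
  next
    case False
    with Suc have m: "1 \<le> m" "m < n" by auto
    from one_point_union.card_union[OF spiro_chain_one_point_union[OF chain m]]
    show ?thesis using Suc.IH m card_hex[of hv m, OF spiro_chain_inj[OF chain m(2)]] by (simp add: chain_verts_Suc)
  qed
qed

lemma Wiener_spiro_chain_Suc:
  assumes chain: "spiro_chain hv n" and m: "1 \<le> m" "m < n"
  shows "Wiener (chain_verts hv (Suc m)) (chain_adj hv (Suc m))
           = Wiener (chain_verts hv m) (chain_adj hv m)
             + 5 * Wv (chain_verts hv m) (chain_adj hv m) (cutv hv m) + 45 * m + 27"
proof -
  interpret one_point_union "chain_verts hv m" "hex hv m" "chain_adj hv m" "hex_adj hv m" "cutv hv m"
    using spiro_chain_one_point_union[OF assms] .
  have inj: "inj_on (hv m) {..<6}" using spiro_chain_inj[OF chain m(2)] .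
  have "dist_sum (chain_verts hv (Suc m)) (chain_adj hv (Suc m))
      = dist_sum (chain_verts hv m) (chain_adj hv m)
        + 2 * (5 * Wv (chain_verts hv m) (chain_adj hv m) (cutv hv m) + 45 * m + 27)"
    using dist_sum_union Wv_hex[of hv m, OF inj c_in_B] dist_sum_hex[of hv m, OF inj] card_hex[of hv m, OF inj]
      card_spiro_chain_verts[OF chain m(1)] m(2)
    unfolding chain_adj_Suc chain_verts_Suc by simp
  then show ?thesis by (simp add: Wiener_eq_dist_sum_div_2)
qed

lemma Wv_spiro_chain_Suc:
  assumes chain: "spiro_chain hv n" and m: "1 \<le> m" "m < n" and x: "x \<in> hex hv m"
  shows "Wv (chain_verts hv (Suc m)) (chain_adj hv (Suc m)) x
           = Wv (chain_verts hv m) (chain_adj hv m) (cutv hv m)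
             + 5 * m * gdist (chain_adj hv (Suc m)) (cutv hv m) x + 9"
proof -
  interpret one_point_union "chain_verts hv m" "hex hv m" "chain_adj hv m" "hex_adj hv m" "cutv hv m"
    using spiro_chain_one_point_union[OF chain m] .
  have inj: "inj_on (hv m) {..<6}" using spiro_chain_inj[OF chain m(2)] .
  show ?thesis
    using Wv_union_B[OF x] gdist_union_from_c[OF x] Wv_hex[of hv m, OF inj x]
      card_spiro_chain_verts[OF chain m(1)] m(2)
    unfolding chain_adj_Suc chain_verts_Suc by simp
qed

lemma Wv_chain_1: "inj_on (hv 0) {..<6} \<Longrightarrow> x \<in> hex hv 0 \<Longrightarrow> Wv (chain_verts hv 1) (chain_adj hv 1) x = 9"
  unfolding chain_verts_1 chain_adj_1 by (rule Wv_hex)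

lemma Wiener_chain_1: "inj_on (hv 0) {..<6} \<Longrightarrow> Wiener (chain_verts hv 1) (chain_adj hv 1) = 27"
  unfolding chain_verts_1 chain_adj_1 Wiener_eq_dist_sum_div_2 by (simp add: dist_sum_hex)

theorem theorem2p1:
  fixes hv :: "nat \<Rightarrow> nat \<Rightarrow> 'a" and n :: nat
  assumes "n \<ge> 2" and "spiro_chain hv n"
  shows "(Wiener (chain_verts hv n) (chain_adj hv n)
           = Wiener (chain_verts hv (n - 1)) (chain_adj hv (n - 1))
             + 5 * Wv (chain_verts hv (n - 1)) (chain_adj hv (n - 1)) (cutv hv (n - 1))
             + 45 * n - 18) \<and>
         (\<forall>x \<in> hex hv (n - 1) - {cutv hv (n - 1)}.
           (gdist (chain_adj hv n) (cutv hv (n - 1)) x = 1 \<longrightarrow>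
              Wv (chain_verts hv n) (chain_adj hv n) x
                = Wv (chain_verts hv (n - 1)) (chain_adj hv (n - 1)) (cutv hv (n - 1))
                  + (5 * (n - 1) + 9)) \<and>
           (gdist (chain_adj hv n) (cutv hv (n - 1)) x = 2 \<longrightarrow>
              Wv (chain_verts hv n) (chain_adj hv n) x
                = Wv (chain_verts hv (n - 1)) (chain_adj hv (n - 1)) (cutv hv (n - 1))
                  + (10 * (n - 1) + 9)) \<and>
           (gdist (chain_adj hv n) (cutv hv (n - 1)) x = 3 \<longrightarrow>
              Wv (chain_verts hv n) (chain_adj hv n) x
                = Wv (chain_verts hv (n - 1)) (chain_adj hv (n - 1)) (cutv hv (n - 1))
                  + (15 * (n - 1) + 9))) \<and>
         Wiener (chain_verts hv 1) (chain_adj hv 1) = 27 \<and>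
         (\<forall>x \<in> hex hv 0. Wv (chain_verts hv 1) (chain_adj hv 1) x = 9)"
proof -
  obtain m where n: "n = Suc m" and m: "1 \<le> m" "m < n"
    using assms(1) by (metis One_nat_def Suc_le_D Suc_le_mono lessI numeral_2_eq_2)
  have inj0: "inj_on (hv 0) {..<6}" using spiro_chain_inj[OF assms(2)] m by simp
  have Wv_last: "Wv (chain_verts hv n) (chain_adj hv n) x
      = Wv (chain_verts hv m) (chain_adj hv m) (cutv hv m) + 5 * m * d + 9"
    if "x \<in> hex hv m" and "gdist (chain_adj hv n) (cutv hv m) x = d" for x d
    using Wv_spiro_chain_Suc[OF assms(2) m that(1)] that(2) unfolding n by simp
  show ?thesis
    using Wiener_spiro_chain_Suc[OF assms(2) m] Wv_last Wiener_chain_1[of hv, OF inj0] Wv_chain_1[of hv, OF inj0]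
    unfolding n by (auto simp: algebra_simps)
qed

end
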